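(* Let $\Omega=\mathbb R^d$ or $\Omega=\mathbb T^d=\mathbb R^d/\mathbb Z^d$, $d\ge1$. Let $K\in L^1(\Omega)$ be nonnegative with $\int_\Omega K=1$, and let $f\in L^p(\Omega)$. If $p\in[2,\infty)$, then \[ \|K*f\|_{L^p(\Omega)}\le\|K*(|f|^{p/2})\|_{L^2(\Omega)}^{2/p}. \] If $p\in(1,2]$, then \[ \|K*f\|_{L^p(\Omega)}\le\|K*(|f|^{p/2})\|_{L^2(\Omega)}^{2(p-1)/p}\,\|f\|_{L^p(\Omega)}^{2-p}. \]
   Context: $(K*f)(x)=\int_\Omega K(x-y)f(y)\,dy$. *)

theory Defs
  imports "HOL-Analysis.Analysis"
begin

definition Lp_norm :: "'a measure \<Rightarrow> real \<Rightarrow> ('a \<Rightarrow> real) \<Rightarrow> real" where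
  "Lp_norm M p f = (\<integral>x. \<bar>f x\<bar> powr p \<partial>M) powr (1 / p)"

definition memLp :: "'a measure \<Rightarrow> real \<Rightarrow> ('a \<Rightarrow> real) \<Rightarrow> bool" where
  "memLp M p f \<longleftrightarrow> f \<in> borel_measurable M \<and> integrable M (\<lambda>x. \<bar>f x\<bar> powr p)"

definition conv :: "'a measure \<Rightarrow> ('a::ab_group_add \<Rightarrow> real) \<Rightarrow> ('a \<Rightarrow> real) \<Rightarrow> 'a \<Rightarrow> real" where
  "conv M K f x = (\<integral>y. K (x - y) * f y \<partial>M)"

text \<open>Functions on R^d that are Z^d-periodic, i.e. functions on the torus R^d/Z^d.\<close>
definition Zd_periodic :: "('a::euclidean_space \<Rightarrow> real) \<Rightarrow> bool" where
  "Zd_periodic g \<longleftrightarrow> (\<forall>x. \<forall>b\<in>Basis. g (x + b) = g x)"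

text \<open>Haar (Lebesgue) measure on the torus, realised on the fundamental domain [0,1]^d.\<close>
definition torus_measure :: "'a::euclidean_space measure" where
  "torus_measure = lebesgue_on (cbox 0 One)"

end

theory Submission
  imports Defs
begin

text \<open>
  For fixed x the kernel y \<mapsto> K (x - y) is a sub-probability density. Jensen's inequality for
  t \<mapsto> t powr (2/p) gives |K*f|^p \<le> (K*|f|^(p/2))^2 pointwise if p \<ge> 2; for p \<le> 2, Hoelder's
  inequality applied to |f| = (|f|^(p/2))^\<theta> (|f|^p)^(1-\<theta>) with \<theta> = 2(p-1)/p gives
  |K*f|^p \<le> (K*|f|^(p/2))^(2(p-1)) (K*|f|^p)^(2-p). Integrating in x, Hoelder's inequality once more
  and \<integral> K*|f|^p \<le> \<integral> |f|^p (Tonelli, the integral of K(x - y) in x being 1) give the claim.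
  All that is used about K(x - y) is that it is a nonnegative kernel whose row and column integrals
  are at most 1; on the torus this comes from the translation invariance of integrals of periodic
  functions over unit cubes.
\<close>

section \<open>Weighted Hoelder and Jensen inequalities\<close>

lemma powr_mult_powr_le_convex_comb:
  fixes a b A B \<theta> :: real
  assumes "0 \<le> a" "0 \<le> b" "0 < A" "0 < B" "0 \<le> \<theta>" "\<theta> \<le> 1"
  shows "a powr \<theta> * b powr (1 - \<theta>) \<le> A powr \<theta> * B powr (1 - \<theta>) * (\<theta> / A * a + (1 - \<theta>) / B * b)"
proof -
  have "(a / A) powr \<theta> * (b / B) powr (1 - \<theta>) \<le> \<theta> * (a / A) + (1 - \<theta>) * (b / B)"
    using assms Youngs_inequality_0[of \<theta> "1 - \<theta>" "a / A" "b / B"] by (cases "a = 0 \<or> b = 0") auto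
  moreover have "(a / A) powr \<theta> * (b / B) powr (1 - \<theta>) = a powr \<theta> * b powr (1 - \<theta>) / (A powr \<theta> * B powr (1 - \<theta>))"
    using assms by (simp add: powr_divide)
  ultimately show ?thesis
    using assms by (simp add: divide_le_eq mult.commute)
qed

lemma weighted_Holder_integral:
  fixes w a b :: "'b \<Rightarrow> real" and N :: "'b measure"
  assumes [measurable]: "w \<in> borel_measurable N" "a \<in> borel_measurable N" "b \<in> borel_measurable N"
    and nonneg: "\<And>y. y \<in> space N \<Longrightarrow> 0 \<le> w y \<and> 0 \<le> a y \<and> 0 \<le> b y"
    and wa: "integrable N (\<lambda>y. w y * a y)" and wb: "integrable N (\<lambda>y. w y * b y)"
    and \<theta>: "0 < \<theta>" "\<theta> < 1"
  shows "integrable N (\<lambda>y. w y * (a y powr \<theta> * b y powr (1 - \<theta>)))"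
    and "(\<integral>y. w y * (a y powr \<theta> * b y powr (1 - \<theta>)) \<partial>N)
          \<le> (\<integral>y. w y * a y \<partial>N) powr \<theta> * (\<integral>y. w y * b y \<partial>N) powr (1 - \<theta>)"
proof -
  define A where "A = (\<integral>y. w y * a y \<partial>N)"
  define B where "B = (\<integral>y. w y * b y \<partial>N)"
  have bound: "w y * (a y powr \<theta> * b y powr (1 - \<theta>))
      \<le> A' powr \<theta> * B' powr (1 - \<theta>) * (\<theta> / A' * (w y * a y) + (1 - \<theta>) / B' * (w y * b y))"
    if "y \<in> space N" "0 < A'" "0 < B'" for y A' B'
    using mult_left_mono[OF powr_mult_powr_le_convex_comb[of "a y" "b y" A' B' \<theta>], of "w y"] nonneg[OF that(1)] that \<theta>
    by (simp add: algebra_simps)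
  show int: "integrable N (\<lambda>y. w y * (a y powr \<theta> * b y powr (1 - \<theta>)))"
    by (rule Bochner_Integration.integrable_bound[where f="\<lambda>y. \<theta> * (w y * a y) + (1 - \<theta>) * (w y * b y)"])
       (use wa wb bound[of _ 1 1] nonneg in \<open>auto intro!: AE_I2 intro: order.trans[OF _ abs_ge_self]\<close>)
  show "(\<integral>y. w y * (a y powr \<theta> * b y powr (1 - \<theta>)) \<partial>N) \<le> A powr \<theta> * B powr (1 - \<theta>)"
  proof (cases "A = 0 \<or> B = 0")
    case True
    have "AE y in N. w y * a y = 0 \<or> w y * b y = 0"
      using True integral_nonneg_eq_0_iff_AE[OF wa] integral_nonneg_eq_0_iff_AE[OF wb] nonneg
      unfolding A_def B_def by (auto elim!: eventually_mono)
    then have "AE y in N. w y * (a y powr \<theta> * b y powr (1 - \<theta>)) = 0"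
      by eventually_elim auto
    then show ?thesis
      by (simp add: integral_eq_zero_AE)
  next
    case False
    have "0 \<le> A" "0 \<le> B"
      unfolding A_def B_def using nonneg by auto
    with False have AB: "0 < A" "0 < B" by auto
    have "(\<integral>y. w y * (a y powr \<theta> * b y powr (1 - \<theta>)) \<partial>N)
        \<le> (\<integral>y. A powr \<theta> * B powr (1 - \<theta>) * (\<theta> / A * (w y * a y) + (1 - \<theta>) / B * (w y * b y)) \<partial>N)"
      using wa wb bound AB by (intro integral_mono[OF int]) auto
    also have "\<dots> = A powr \<theta> * B powr (1 - \<theta>)"
      using wa wb AB unfolding A_def B_def by simp
    finally show ?thesis .
  qed
qed

lemma weighted_Jensen_powr:
  fixes w a :: "'b \<Rightarrow> real" and N :: "'b measure"
  assumes [measurable]: "w \<in> borel_measurable N" "a \<in> borel_measurable N"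
    and nonneg: "\<And>y. y \<in> space N \<Longrightarrow> 0 \<le> w y \<and> 0 \<le> a y"
    and w: "integrable N w" "(\<integral>y. w y \<partial>N) \<le> 1"
    and wa: "integrable N (\<lambda>y. w y * a y)"
    and \<theta>: "0 < \<theta>" "\<theta> \<le> 1"
  shows "integrable N (\<lambda>y. w y * a y powr \<theta>)"
    and "(\<integral>y. w y * a y powr \<theta> \<partial>N) \<le> (\<integral>y. w y * a y \<partial>N) powr \<theta>"
proof -
  have "integrable N (\<lambda>y. w y * a y powr \<theta>) \<and>
      (\<integral>y. w y * a y powr \<theta> \<partial>N) \<le> (\<integral>y. w y * a y \<partial>N) powr \<theta>"
  proof (cases "\<theta> = 1")
    case True
    have eq: "w y * a y powr \<theta> = w y * a y" if "y \<in> space N" for y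
      using nonneg[OF that] True by simp
    have "integrable N (\<lambda>y. w y * a y powr \<theta>)"
      using wa by (simp add: Bochner_Integration.integrable_cong[OF refl eq])
    moreover have "(\<integral>y. w y * a y powr \<theta> \<partial>N) = (\<integral>y. w y * a y \<partial>N)"
      using eq by (rule Bochner_Integration.integral_cong[OF refl])
    ultimately show ?thesis
      using True by simp
  next
    case False
    have w1: "integrable N (\<lambda>y. w y * 1)"
      using w by simp
    have "(\<integral>y. w y * (a y powr \<theta> * 1 powr (1 - \<theta>)) \<partial>N)
        \<le> (\<integral>y. w y * a y \<partial>N) powr \<theta> * (\<integral>y. w y * 1 \<partial>N) powr (1 - \<theta>)"
      using False \<theta> nonneg by (intro weighted_Holder_integral(2)[OF _ _ _ _ wa w1]) auto
    also have "\<dots> \<le> (\<integral>y. w y * a y \<partial>N) powr \<theta>"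
    proof (rule mult_left_le)
      have "0 \<le> (\<integral>y. w y * 1 \<partial>N)"
        using nonneg by simp
      then show "(\<integral>y. w y * 1 \<partial>N) powr (1 - \<theta>) \<le> 1"
        using w \<theta> by (simp add: powr_le1)
    qed simp
    finally show ?thesis
      using weighted_Holder_integral(1)[OF _ _ _ _ wa w1, of \<theta>] False \<theta> nonneg by simp
  qed
  then show "integrable N (\<lambda>y. w y * a y powr \<theta>)"
    and "(\<integral>y. w y * a y powr \<theta> \<partial>N) \<le> (\<integral>y. w y * a y \<partial>N) powr \<theta>"
    by auto
qed

context
  fixes N :: "'b measure" and w F :: "'b \<Rightarrow> real" and p :: real
  assumes w_measurable[measurable]: "w \<in> borel_measurable N"
    and w_nonneg: "\<And>y. 0 \<le> w y"
    and w_integrable: "integrable N w"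
    and w_mass: "(\<integral>y. w y \<partial>N) \<le> 1"
    and F_measurable[measurable]: "F \<in> borel_measurable N"
    and wF_integrable: "integrable N (\<lambda>y. w y * \<bar>F y\<bar> powr p)"
    and p_gt_1: "1 < p"
begin

lemma weighted_Jensen_abs_powr:
  assumes "0 < \<theta>" "\<theta> \<le> 1"
  shows "integrable N (\<lambda>y. w y * \<bar>F y\<bar> powr (p * \<theta>))"
    and "(\<integral>y. w y * \<bar>F y\<bar> powr (p * \<theta>) \<partial>N) \<le> (\<integral>y. w y * \<bar>F y\<bar> powr p \<partial>N) powr \<theta>"
  using weighted_Jensen_powr[OF _ _ _ w_integrable w_mass wF_integrable assms]
  by (simp_all add: w_nonneg powr_powr)

lemma integrable_weighted_half_power: "integrable N (\<lambda>y. w y * \<bar>F y\<bar> powr (p / 2))"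
  using weighted_Jensen_abs_powr(1)[of "1 / 2"] by simp

lemma abs_integral_weighted_le: "\<bar>\<integral>y. w y * F y \<partial>N\<bar> \<le> (\<integral>y. w y * \<bar>F y\<bar> \<partial>N)"
  using integral_norm_bound[of N "\<lambda>y. w y * F y"] by (simp add: abs_mult w_nonneg)

lemma weighted_half_power_sq_le:
  "\<bar>\<integral>y. w y * \<bar>F y\<bar> powr (p / 2) \<partial>N\<bar> powr 2 \<le> (\<integral>y. w y * \<bar>F y\<bar> powr p \<partial>N)"
proof -
  have "(\<integral>y. w y * \<bar>F y\<bar> powr (p / 2) \<partial>N) \<le> (\<integral>y. w y * \<bar>F y\<bar> powr p \<partial>N) powr (1 / 2)"
    using weighted_Jensen_abs_powr(2)[of "1 / 2"] by simp
  then have "\<bar>\<integral>y. w y * \<bar>F y\<bar> powr (p / 2) \<partial>N\<bar> powr 2 \<le> ((\<integral>y. w y * \<bar>F y\<bar> powr p \<partial>N) powr (1 / 2)) powr 2"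
    by (intro powr_mono2) (auto simp: w_nonneg)
  then show ?thesis
    by (simp add: powr_powr w_nonneg)
qed

lemma weighted_powr_le_half_power_sq:
  assumes "2 \<le> p"
  shows "\<bar>\<integral>y. w y * F y \<partial>N\<bar> powr p \<le> \<bar>\<integral>y. w y * \<bar>F y\<bar> powr (p / 2) \<partial>N\<bar> powr 2"
proof -
  let ?g = "\<lambda>y. \<bar>F y\<bar> powr (p / 2)"
  have "(\<integral>y. w y * ?g y powr (2 / p) \<partial>N) \<le> (\<integral>y. w y * ?g y \<partial>N) powr (2 / p)"
    using weighted_Jensen_powr(2)[OF _ _ _ w_integrable w_mass integrable_weighted_half_power, of "2 / p"]
      assms by (simp add: w_nonneg)
  then have "(\<integral>y. w y * \<bar>F y\<bar> \<partial>N) \<le> (\<integral>y. w y * ?g y \<partial>N) powr (2 / p)"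
    using p_gt_1 by (simp add: powr_powr)
  with abs_integral_weighted_le have "\<bar>\<integral>y. w y * F y \<partial>N\<bar> powr p \<le> ((\<integral>y. w y * ?g y \<partial>N) powr (2 / p)) powr p"
    using p_gt_1 by (intro powr_mono2) auto
  then show ?thesis
    using p_gt_1 by (simp add: powr_powr w_nonneg)
qed

lemma weighted_powr_le_interpolation:
  assumes "p < 2"
  shows "\<bar>\<integral>y. w y * F y \<partial>N\<bar> powr p
    \<le> (\<bar>\<integral>y. w y * \<bar>F y\<bar> powr (p / 2) \<partial>N\<bar> powr 2) powr (p - 1) * (\<integral>y. w y * \<bar>F y\<bar> powr p \<partial>N) powr (2 - p)"
proof -
  define \<theta> where "\<theta> = 2 * (p - 1) / p"
  define g where "g = (\<lambda>y. \<bar>F y\<bar> powr (p / 2))"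
  define G where "G = (\<lambda>y. \<bar>F y\<bar> powr p)"
  define A where "A = (\<integral>y. w y * g y \<partial>N)"
  define B where "B = (\<integral>y. w y * G y \<partial>N)"
  have \<theta>: "0 < \<theta>" "\<theta> < 1"
    unfolding \<theta>_def using p_gt_1 assms by (auto simp: field_simps)
  have exponent: "p / 2 * \<theta> + p * (1 - \<theta>) = 1"
    unfolding \<theta>_def using p_gt_1 by (simp add: field_simps)
  have interpolate: "g y powr \<theta> * G y powr (1 - \<theta>) = \<bar>F y\<bar>" for y
    using exponent unfolding g_def G_def by (simp add: powr_powr flip: powr_add)
  have "(\<integral>y. w y * (g y powr \<theta> * G y powr (1 - \<theta>)) \<partial>N) \<le> A powr \<theta> * B powr (1 - \<theta>)"
    using integrable_weighted_half_power wF_integrable \<theta> unfolding A_def B_def g_def G_def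
    by (intro weighted_Holder_integral(2)) (auto simp: w_nonneg)
  then have "(\<integral>y. w y * \<bar>F y\<bar> \<partial>N) \<le> A powr \<theta> * B powr (1 - \<theta>)"
    unfolding interpolate .
  with abs_integral_weighted_le have "\<bar>\<integral>y. w y * F y \<partial>N\<bar> powr p \<le> (A powr \<theta> * B powr (1 - \<theta>)) powr p"
    using p_gt_1 by (intro powr_mono2) auto
  also have "\<dots> = A powr (\<theta> * p) * B powr ((1 - \<theta>) * p)"
    by (simp add: powr_mult powr_powr)
  also have "\<dots> = (\<bar>A\<bar> powr 2) powr (p - 1) * B powr (2 - p)"
  proof -
    have "\<theta> * p = 2 * (p - 1)" "(1 - \<theta>) * p = 2 - p"
      unfolding \<theta>_def using p_gt_1 by (auto simp: field_simps)
    moreover have "0 \<le> A"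
      unfolding A_def g_def by (simp add: w_nonneg)
    then have "(\<bar>A\<bar> powr 2) powr (p - 1) = A powr (2 * (p - 1))"
      by (simp only: powr_powr abs_of_nonneg)
    ultimately show ?thesis
      by simp
  qed
  finally show ?thesis
    unfolding A_def B_def g_def G_def .
qed

end

section \<open>Doubly substochastic integral kernels\<close>

definition half_power_L2_bounds ::
    "'a measure \<Rightarrow> real \<Rightarrow> (('a \<Rightarrow> real) \<Rightarrow> 'a \<Rightarrow> real) \<Rightarrow> ('a \<Rightarrow> real) \<Rightarrow> bool" where
  "half_power_L2_bounds M p T f \<longleftrightarrow>
     (2 \<le> p \<longrightarrow>
        Lp_norm M p (T f) \<le> Lp_norm M 2 (T (\<lambda>y. \<bar>f y\<bar> powr (p / 2))) powr (2 / p))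
   \<and> (p \<le> 2 \<longrightarrow>
        Lp_norm M p (T f) \<le> Lp_norm M 2 (T (\<lambda>y. \<bar>f y\<bar> powr (p / 2))) powr (2 * (p - 1) / p)
          * Lp_norm M p f powr (2 - p))"

lemma half_power_L2_boundsI:
  fixes M :: "'a measure" and p :: real and T :: "('a \<Rightarrow> real) \<Rightarrow> 'a \<Rightarrow> real" and f :: "'a \<Rightarrow> real"
  defines "I \<equiv> \<integral>x. \<bar>T f x\<bar> powr p \<partial>M"
    and "J \<equiv> \<integral>x. \<bar>T (\<lambda>y. \<bar>f y\<bar> powr (p / 2)) x\<bar> powr 2 \<partial>M"
    and "L \<equiv> \<integral>x. \<bar>f x\<bar> powr p \<partial>M"
  assumes p: "1 < p"
    and ge2: "2 \<le> p \<Longrightarrow> I \<le> J"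
    and le2: "p < 2 \<Longrightarrow> I \<le> J powr (p - 1) * L powr (2 - p)"
    and JL: "J \<le> L"
  shows "half_power_L2_bounds M p T f"
proof -
  have nonneg: "0 \<le> I" "0 \<le> J" "0 \<le> L"
    unfolding I_def J_def L_def by auto
  have norms: "Lp_norm M p (T f) = I powr (1 / p)"
    "Lp_norm M 2 (T (\<lambda>y. \<bar>f y\<bar> powr (p / 2))) = J powr (1 / 2)"
    "Lp_norm M p f = L powr (1 / p)"
    unfolding Lp_norm_def I_def J_def L_def by simp_all
  have "I powr (1 / p) \<le> (J powr (1 / 2)) powr (2 / p)" if "2 \<le> p"
    using ge2[OF that] nonneg p by (simp add: powr_powr powr_mono2)
  moreover have "I powr (1 / p) \<le> (J powr (1 / 2)) powr (2 * (p - 1) / p) * (L powr (1 / p)) powr (2 - p)"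
    if "p \<le> 2"
  proof (cases "p = 2")
    case True
    \<comment> \<open>separate case since \<open>L powr 0 = 0\<close> when \<open>L = 0\<close>\<close>
    then show ?thesis
      using ge2 JL nonneg by (cases "L = 0") (simp_all add: powr_mono2)
  next
    case False
    then have "p < 2" using that by simp
    have "(J powr (1 / 2)) powr (2 * (p - 1) / p) * (L powr (1 / p)) powr (2 - p)
        = (J powr (p - 1) * L powr (2 - p)) powr (1 / p)"
    proof -
      have "(2 * p - 2) / (2 * p) = (p - 1) / p"
        using p by (simp add: field_simps)
      then show ?thesis
        using nonneg p by (simp add: powr_powr powr_mult)
    qed
    then show ?thesis
      using le2[OF \<open>p < 2\<close>] nonneg p by (simp add: powr_mono2)
  qed
  ultimately show ?thesis
    unfolding half_power_L2_bounds_def norms by blast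
qed

lemma memLpD:
  assumes "memLp M p f"
  shows "f \<in> borel_measurable M" "integrable M (\<lambda>x. \<bar>f x\<bar> powr p)"
  using assms unfolding memLp_def by auto

definition kernel_op :: "'a measure \<Rightarrow> ('a \<Rightarrow> 'a \<Rightarrow> real) \<Rightarrow> ('a \<Rightarrow> real) \<Rightarrow> 'a \<Rightarrow> real" where
  "kernel_op M k \<phi> x = (\<integral>y. k x y * \<phi> y \<partial>M)"

locale doubly_substochastic_kernel = sigma_finite_measure M
  for M :: "'a measure" and k :: "'a \<Rightarrow> 'a \<Rightarrow> real" +
  assumes kernel_measurable[measurable]: "(\<lambda>(x, y). k x y) \<in> borel_measurable (M \<Otimes>\<^sub>M M)"
    and kernel_nonneg: "\<And>x y. 0 \<le> k x y"
    and row_mass: "\<And>x. x \<in> space M \<Longrightarrow> (\<integral>\<^sup>+y. k x y \<partial>M) \<le> 1"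
    and column_mass: "\<And>y. y \<in> space M \<Longrightarrow> (\<integral>\<^sup>+x. k x y \<partial>M) \<le> 1"
begin

interpretation pair_sigma_finite M M ..

lemma measurable_kernel_row: "x \<in> space M \<Longrightarrow> k x \<in> borel_measurable M"
  using measurable_Pair2[OF kernel_measurable] by simp

lemma measurable_kernel_op[measurable]:
  assumes [measurable]: "\<phi> \<in> borel_measurable M"
  shows "kernel_op M k \<phi> \<in> borel_measurable M"
  unfolding kernel_op_def by measurable

lemma kernel_op_nonneg: "(\<And>y. 0 \<le> \<phi> y) \<Longrightarrow> 0 \<le> kernel_op M k \<phi> x"
  unfolding kernel_op_def by (simp add: kernel_nonneg)

lemma integrable_kernel_row: "x \<in> space M \<Longrightarrow> integrable M (k x)"
  using row_mass[of x] measurable_kernel_row[of x]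
  by (intro integrableI_nonneg) (auto simp: kernel_nonneg top.not_eq_extremum intro: le_less_trans)

lemma integral_kernel_row_le:
  assumes "x \<in> space M"
  shows "(\<integral>y. k x y \<partial>M) \<le> 1"
proof -
  have "ennreal (\<integral>y. k x y \<partial>M) = (\<integral>\<^sup>+y. k x y \<partial>M)"
    using nn_integral_eq_integral[OF integrable_kernel_row[OF assms]] by (simp add: kernel_nonneg)
  then show ?thesis
    using row_mass[OF assms] by (metis ennreal_le_1)
qed

lemma nn_integral_kernel_mult_le:
  assumes [measurable]: "\<phi> \<in> borel_measurable M" and nonneg: "\<And>y. 0 \<le> \<phi> y"
  shows "(\<integral>\<^sup>+x. \<integral>\<^sup>+y. ennreal (k x y * \<phi> y) \<partial>M \<partial>M) \<le> (\<integral>\<^sup>+y. ennreal (\<phi> y) \<partial>M)"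
proof -
  have "(\<integral>\<^sup>+x. \<integral>\<^sup>+y. ennreal (k x y * \<phi> y) \<partial>M \<partial>M) = (\<integral>\<^sup>+y. \<integral>\<^sup>+x. ennreal (k x y * \<phi> y) \<partial>M \<partial>M)"
    by (rule Fubini'[symmetric]) measurable
  also have "\<dots> = (\<integral>\<^sup>+y. (\<integral>\<^sup>+x. ennreal (k x y) \<partial>M) * \<phi> y \<partial>M)"
    by (intro nn_integral_cong) (simp add: ennreal_mult nonneg kernel_nonneg nn_integral_multc)
  also have "\<dots> \<le> (\<integral>\<^sup>+y. 1 * ennreal (\<phi> y) \<partial>M)"
    using column_mass by (intro nn_integral_mono mult_right_mono) auto
  finally show ?thesis
    by simp
qed

context
  fixes \<phi> :: "'a \<Rightarrow> real"
  assumes \<phi>_measurable[measurable]: "\<phi> \<in> borel_measurable M"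
    and \<phi>_nonneg: "\<And>y. 0 \<le> \<phi> y"
    and \<phi>_integrable: "integrable M \<phi>"
begin

lemma AE_integrable_kernel_mult: "AE x in M. integrable M (\<lambda>y. k x y * \<phi> y)"
proof -
  have "(\<integral>\<^sup>+x. \<integral>\<^sup>+y. ennreal (k x y * \<phi> y) \<partial>M \<partial>M) \<noteq> \<infinity>"
    using nn_integral_kernel_mult_le[OF \<phi>_measurable \<phi>_nonneg] \<phi>_integrable
    by (auto simp: \<phi>_nonneg nn_integral_eq_integral top_unique)
  then have "AE x in M. (\<integral>\<^sup>+y. ennreal (k x y * \<phi> y) \<partial>M) \<noteq> \<infinity>"
    by (intro nn_integral_PInf_AE) measurable
  then show ?thesis
  proof (rule AE_mp[OF _ AE_I2], intro impI)
    fix x assume "x \<in> space M" "(\<integral>\<^sup>+y. ennreal (k x y * \<phi> y) \<partial>M) \<noteq> \<infinity>"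
    then show "integrable M (\<lambda>y. k x y * \<phi> y)"
      using measurable_kernel_row[of x]
      by (intro integrableI_nonneg) (auto simp: kernel_nonneg \<phi>_nonneg top.not_eq_extremum)
  qed
qed

lemma nn_integral_kernel_op_le: "(\<integral>\<^sup>+x. kernel_op M k \<phi> x \<partial>M) \<le> ennreal (\<integral>y. \<phi> y \<partial>M)"
proof -
  have "ennreal (kernel_op M k \<phi> x) \<le> (\<integral>\<^sup>+y. ennreal (k x y * \<phi> y) \<partial>M)" for x
    unfolding kernel_op_def
    by (cases "integrable M (\<lambda>y. k x y * \<phi> y)")
       (auto simp: nn_integral_eq_integral kernel_nonneg \<phi>_nonneg not_integrable_integral_eq)
  then have "(\<integral>\<^sup>+x. kernel_op M k \<phi> x \<partial>M) \<le> (\<integral>\<^sup>+x. \<integral>\<^sup>+y. ennreal (k x y * \<phi> y) \<partial>M \<partial>M)"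
    by (intro nn_integral_mono)
  also have "\<dots> \<le> ennreal (\<integral>y. \<phi> y \<partial>M)"
    using nn_integral_kernel_mult_le[OF \<phi>_measurable \<phi>_nonneg] \<phi>_integrable
    by (simp add: \<phi>_nonneg nn_integral_eq_integral)
  finally show ?thesis .
qed

lemma integrable_kernel_op: "integrable M (kernel_op M k \<phi>)"
  using nn_integral_kernel_op_le
  by (intro integrableI_nonneg) (auto simp: kernel_op_nonneg \<phi>_nonneg top.not_eq_extremum intro: le_less_trans)

lemma integral_kernel_op_le: "(\<integral>x. kernel_op M k \<phi> x \<partial>M) \<le> (\<integral>y. \<phi> y \<partial>M)"
  using nn_integral_kernel_op_le nn_integral_eq_integral[OF integrable_kernel_op]
  by (simp add: kernel_op_nonneg \<phi>_nonneg)

end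

context
  fixes F :: "'a \<Rightarrow> real" and p :: real
  assumes F_Lp: "memLp M p F" and p_gt_1: "1 < p"
begin

lemmas F_measurable[measurable] = memLpD(1)[OF F_Lp]
  and F_integrable_powr = memLpD(2)[OF F_Lp]

lemma AE_integrable_kernel_mult_abs_powr:
  "AE x in M. x \<in> space M \<and> integrable M (\<lambda>y. k x y * \<bar>F y\<bar> powr p)"
  using AE_integrable_kernel_mult[of "\<lambda>y. \<bar>F y\<bar> powr p"] F_integrable_powr
  by (auto elim!: AE_mp[OF AE_space] intro!: AE_I2)

lemma AE_kernel_op_half_power_sq_le:
  "AE x in M. \<bar>kernel_op M k (\<lambda>y. \<bar>F y\<bar> powr (p / 2)) x\<bar> powr 2 \<le> kernel_op M k (\<lambda>y. \<bar>F y\<bar> powr p) x"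
  using AE_integrable_kernel_mult_abs_powr
proof eventually_elim
  case (elim x)
  then show ?case
    unfolding kernel_op_def using p_gt_1 measurable_kernel_row integrable_kernel_row integral_kernel_row_le
    by (intro weighted_half_power_sq_le) (auto simp: kernel_nonneg)
qed

lemma AE_kernel_op_powr_le_half_power_sq:
  assumes "2 \<le> p"
  shows "AE x in M. \<bar>kernel_op M k F x\<bar> powr p \<le> \<bar>kernel_op M k (\<lambda>y. \<bar>F y\<bar> powr (p / 2)) x\<bar> powr 2"
  using AE_integrable_kernel_mult_abs_powr
proof eventually_elim
  case (elim x)
  then show ?case
    unfolding kernel_op_def using assms p_gt_1 measurable_kernel_row integrable_kernel_row integral_kernel_row_le
    by (intro weighted_powr_le_half_power_sq) (auto simp: kernel_nonneg)
qed

lemma AE_kernel_op_powr_le_interpolation: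
  assumes "p < 2"
  shows "AE x in M. \<bar>kernel_op M k F x\<bar> powr p
    \<le> (\<bar>kernel_op M k (\<lambda>y. \<bar>F y\<bar> powr (p / 2)) x\<bar> powr 2) powr (p - 1)
        * kernel_op M k (\<lambda>y. \<bar>F y\<bar> powr p) x powr (2 - p)"
  using AE_integrable_kernel_mult_abs_powr
proof eventually_elim
  case (elim x)
  then show ?case
    unfolding kernel_op_def using assms p_gt_1 measurable_kernel_row integrable_kernel_row integral_kernel_row_le
    by (intro weighted_powr_le_interpolation) (auto simp: kernel_nonneg)
qed

lemma integrable_kernel_op_half_power_sq:
  "integrable M (\<lambda>x. \<bar>kernel_op M k (\<lambda>y. \<bar>F y\<bar> powr (p / 2)) x\<bar> powr 2)"
proof (rule Bochner_Integration.integrable_bound)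
  show "integrable M (kernel_op M k (\<lambda>y. \<bar>F y\<bar> powr p))"
    using F_integrable_powr by (intro integrable_kernel_op) auto
  show "AE x in M. norm (\<bar>kernel_op M k (\<lambda>y. \<bar>F y\<bar> powr (p / 2)) x\<bar> powr 2)
      \<le> norm (kernel_op M k (\<lambda>y. \<bar>F y\<bar> powr p) x)"
    using AE_kernel_op_half_power_sq_le by eventually_elim (simp add: kernel_op_nonneg)
qed simp

lemma integral_kernel_op_half_power_sq_le:
  "(\<integral>x. \<bar>kernel_op M k (\<lambda>y. \<bar>F y\<bar> powr (p / 2)) x\<bar> powr 2 \<partial>M) \<le> (\<integral>x. \<bar>F x\<bar> powr p \<partial>M)"
proof -
  have "(\<integral>x. \<bar>kernel_op M k (\<lambda>y. \<bar>F y\<bar> powr (p / 2)) x\<bar> powr 2 \<partial>M)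
      \<le> (\<integral>x. kernel_op M k (\<lambda>y. \<bar>F y\<bar> powr p) x \<partial>M)"
    using integrable_kernel_op_half_power_sq integrable_kernel_op F_integrable_powr
      AE_kernel_op_half_power_sq_le
    by (intro integral_mono_AE) auto
  also have "\<dots> \<le> (\<integral>x. \<bar>F x\<bar> powr p \<partial>M)"
    using integral_kernel_op_le F_integrable_powr by simp
  finally show ?thesis .
qed

lemma integral_kernel_op_powr_le_half_power_sq:
  assumes "2 \<le> p"
  shows "(\<integral>x. \<bar>kernel_op M k F x\<bar> powr p \<partial>M)
    \<le> (\<integral>x. \<bar>kernel_op M k (\<lambda>y. \<bar>F y\<bar> powr (p / 2)) x\<bar> powr 2 \<partial>M)"
proof (rule integral_mono_AE)
  show "integrable M (\<lambda>x. \<bar>kernel_op M k F x\<bar> powr p)"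
    using AE_kernel_op_powr_le_half_power_sq[OF assms]
    by (intro Bochner_Integration.integrable_bound[OF integrable_kernel_op_half_power_sq])
       (auto elim!: eventually_mono)
qed (use integrable_kernel_op_half_power_sq AE_kernel_op_powr_le_half_power_sq[OF assms] in auto)

lemma integral_kernel_op_powr_le_interpolation:
  assumes "p < 2"
  shows "(\<integral>x. \<bar>kernel_op M k F x\<bar> powr p \<partial>M)
    \<le> (\<integral>x. \<bar>kernel_op M k (\<lambda>y. \<bar>F y\<bar> powr (p / 2)) x\<bar> powr 2 \<partial>M) powr (p - 1)
        * (\<integral>x. \<bar>F x\<bar> powr p \<partial>M) powr (2 - p)"
proof -
  define Tg_sq where "Tg_sq x = \<bar>kernel_op M k (\<lambda>y. \<bar>F y\<bar> powr (p / 2)) x\<bar> powr 2" for x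
  define TG where "TG = kernel_op M k (\<lambda>y. \<bar>F y\<bar> powr p)"
  have [measurable]: "Tg_sq \<in> borel_measurable M" "TG \<in> borel_measurable M"
    unfolding Tg_sq_def TG_def by measurable
  have TG: "integrable M TG" "\<And>x. 0 \<le> TG x" "(\<integral>x. TG x \<partial>M) \<le> (\<integral>x. \<bar>F x\<bar> powr p \<partial>M)"
    unfolding TG_def using integrable_kernel_op integral_kernel_op_le F_integrable_powr
    by (auto intro: kernel_op_nonneg)
  have \<theta>: "0 < p - 1" "p - 1 < 1"
    using p_gt_1 assms by auto
  have Holder: "integrable M (\<lambda>x. 1 * (Tg_sq x powr (p - 1) * TG x powr (1 - (p - 1))))"
    "(\<integral>x. 1 * (Tg_sq x powr (p - 1) * TG x powr (1 - (p - 1))) \<partial>M)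
      \<le> (\<integral>x. 1 * Tg_sq x \<partial>M) powr (p - 1) * (\<integral>x. 1 * TG x \<partial>M) powr (1 - (p - 1))"
    using weighted_Holder_integral[of "\<lambda>_. 1" M Tg_sq TG "p - 1"] integrable_kernel_op_half_power_sq TG \<theta>
    unfolding Tg_sq_def by auto
  have pointwise: "AE x in M. \<bar>kernel_op M k F x\<bar> powr p \<le> Tg_sq x powr (p - 1) * TG x powr (2 - p)"
    using AE_kernel_op_powr_le_interpolation[OF assms, folded Tg_sq_def TG_def] .
  have "(\<integral>x. \<bar>kernel_op M k F x\<bar> powr p \<partial>M) \<le> (\<integral>x. Tg_sq x powr (p - 1) * TG x powr (2 - p) \<partial>M)"
  proof (rule integral_mono_AE[OF _ _ pointwise])
    show bound: "integrable M (\<lambda>x. Tg_sq x powr (p - 1) * TG x powr (2 - p))"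
      using Holder(1) by simp
    show "integrable M (\<lambda>x. \<bar>kernel_op M k F x\<bar> powr p)"
    proof (rule Bochner_Integration.integrable_bound[OF bound])
      show "AE x in M. norm (\<bar>kernel_op M k F x\<bar> powr p) \<le> norm (Tg_sq x powr (p - 1) * TG x powr (2 - p))"
        using pointwise by eventually_elim simp
    qed simp
  qed
  also have "\<dots> \<le> (\<integral>x. Tg_sq x \<partial>M) powr (p - 1) * (\<integral>x. TG x \<partial>M) powr (2 - p)"
    using Holder(2) by simp
  also have "\<dots> \<le> (\<integral>x. Tg_sq x \<partial>M) powr (p - 1) * (\<integral>x. \<bar>F x\<bar> powr p \<partial>M) powr (2 - p)"
    using TG assms by (intro mult_left_mono powr_mono2) (auto simp: Tg_sq_def)
  finally show ?thesis
    unfolding Tg_sq_def .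
qed

theorem half_power_L2_bounds_kernel_op: "half_power_L2_bounds M p (kernel_op M k) F"
  using p_gt_1 integral_kernel_op_powr_le_half_power_sq integral_kernel_op_powr_le_interpolation
    integral_kernel_op_half_power_sq_le
  by (rule half_power_L2_boundsI)

end

end

section \<open>Convolution kernels on a fundamental domain\<close>

lemma sigma_finite_lebesgue: "sigma_finite_measure (lebesgue :: 'a::euclidean_space measure)"
proof
  obtain A :: "'a set set" where "countable A" "A \<subseteq> sets lborel" "\<Union>A = space lborel"
    "\<forall>a\<in>A. emeasure lborel a \<noteq> \<infinity>"
    using lborel.sigma_finite_countable by blast
  then show "\<exists>A. countable A \<and> A \<subseteq> sets (lebesgue :: 'a measure) \<and> \<Union>A = space lebesgue
      \<and> (\<forall>a\<in>A. emeasure lebesgue a \<noteq> \<infinity>)"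
    by (intro exI[of _ A]) (auto simp: subset_eq)
qed

lemma sigma_finite_lebesgue_on: "S \<in> sets lebesgue \<Longrightarrow> sigma_finite_measure (lebesgue_on S)"
  by (rule sigma_finite_measure_restrict_space[OF sigma_finite_lebesgue]) auto

lemma measurable_id_lebesgue_on[measurable]: "(\<lambda>x. x) \<in> lebesgue_on S \<rightarrow>\<^sub>M borel"
  by (rule measurable_restrict_space1) (simp add: measurable_completion)

lemma borel_measurable_lebesgue_on_AE:
  fixes g h :: "'a::euclidean_space \<Rightarrow> real"
  assumes S: "S \<in> sets lebesgue" and g: "g \<in> borel_measurable (lebesgue_on S)"
    and ae: "AE y in lebesgue_on S. g y = h y"
  shows "h \<in> borel_measurable (lebesgue_on S)"
proof -
  have "(\<lambda>x. if x \<in> S then g x else 0) \<in> borel_measurable lebesgue"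
    using g S by (simp add: borel_measurable_if)
  moreover have "AE x in lebesgue. (if x \<in> S then g x else 0) = (if x \<in> S then h x else 0)"
    using ae S by (subst (asm) AE_restrict_space_iff) (auto elim!: eventually_mono)
  ultimately have "(\<lambda>x. if x \<in> S then h x else 0) \<in> borel_measurable lebesgue"
    by (rule borel_measurable_AE)
  then show ?thesis
    using S by (simp add: borel_measurable_if)
qed

lemma Lp_norm_cong: "(\<And>x. x \<in> space M \<Longrightarrow> f x = g x) \<Longrightarrow> Lp_norm M p f = Lp_norm M p g"
  unfolding Lp_norm_def by (simp cong: Bochner_Integration.integral_cong)

lemma half_power_L2_bounds_conv_lebesgue_on:
  fixes K K' f :: "'a::euclidean_space \<Rightarrow> real"
  assumes S: "S \<in> sets lebesgue"
    and K'[measurable]: "K' \<in> borel_measurable borel" and K'_nonneg: "\<And>z. 0 \<le> K' z"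
    and K_ae: "\<And>x. x \<in> S \<Longrightarrow> AE y in lebesgue_on S. K (x - y) = K' (x - y)"
    and row: "\<And>x. x \<in> S \<Longrightarrow> (\<integral>\<^sup>+y. K' (x - y) \<partial>lebesgue_on S) \<le> 1"
    and column: "\<And>y. y \<in> S \<Longrightarrow> (\<integral>\<^sup>+x. K' (x - y) \<partial>lebesgue_on S) \<le> 1"
    and p: "1 < p" and f: "memLp (lebesgue_on S) p f"
  shows "half_power_L2_bounds (lebesgue_on S) p (conv (lebesgue_on S) K) f"
proof -
  let ?M = "lebesgue_on S" and ?k = "\<lambda>x y. K' (x - y)"
  interpret doubly_substochastic_kernel ?M ?k
  proof (intro doubly_substochastic_kernel.intro doubly_substochastic_kernel_axioms.intro)
    show "sigma_finite_measure ?M"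
      using S by (rule sigma_finite_lebesgue_on)
    show "(\<lambda>(x, y). K' (x - y)) \<in> borel_measurable (?M \<Otimes>\<^sub>M ?M)"
      by measurable
  qed (use K'_nonneg row column in auto)
  have conv_eq: "conv ?M K \<phi> x = kernel_op ?M ?k \<phi> x"
    if "x \<in> space ?M" and [measurable]: "\<phi> \<in> borel_measurable ?M" for \<phi> x
  proof -
    have ae: "AE y in ?M. K' (x - y) * \<phi> y = K (x - y) * \<phi> y"
      using K_ae[of x] that(1) S by (auto elim!: eventually_mono)
    have "(\<lambda>y. K' (x - y) * \<phi> y) \<in> borel_measurable ?M"
      by measurable
    moreover from this ae have "(\<lambda>y. K (x - y) * \<phi> y) \<in> borel_measurable ?M"
      by (rule borel_measurable_lebesgue_on_AE[OF S])
    ultimately show ?thesis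
      unfolding conv_def kernel_op_def using ae by (intro integral_cong_AE) (auto elim!: eventually_mono)
  qed
  note memLpD(1)[OF f, measurable]
  have "Lp_norm ?M p (conv ?M K f) = Lp_norm ?M p (kernel_op ?M ?k f)"
    "Lp_norm ?M 2 (conv ?M K (\<lambda>y. \<bar>f y\<bar> powr (p / 2)))
      = Lp_norm ?M 2 (kernel_op ?M ?k (\<lambda>y. \<bar>f y\<bar> powr (p / 2)))"
    by (intro Lp_norm_cong conv_eq, assumption, measurable)+
  with half_power_L2_bounds_kernel_op[OF f p] show ?thesis
    unfolding half_power_L2_bounds_def by simp
qed

lemma nn_integral_lebesgue_on_borel:
  assumes "S \<in> sets borel"
  shows "(\<integral>\<^sup>+y. g y \<partial>lebesgue_on S) = (\<integral>\<^sup>+y. g y * indicator S y \<partial>lebesgue)"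
  using assms by (simp add: nn_integral_restrict_space)

lemma borel_representative_lebesgue_on:
  fixes K :: "'a::euclidean_space \<Rightarrow> real"
  assumes S: "S \<in> sets borel" and K: "K \<in> borel_measurable (lebesgue_on S)"
  obtains K0 N where "K0 \<in> borel_measurable borel" "N \<in> null_sets lborel"
    and "\<And>z. z \<in> S \<Longrightarrow> z \<notin> N \<Longrightarrow> K z = K0 z"
proof -
  have "(\<lambda>z. if z \<in> S then K z else 0) \<in> borel_measurable (completion lborel)"
    using K S by (simp add: borel_measurable_if)
  then obtain K0 where K0: "K0 \<in> borel_measurable lborel"
    and ae: "AE z in lborel. (if z \<in> S then K z else 0) = K0 z"
    using completion_ex_borel_measurable_real by blast
  from ae obtain N where "N \<in> null_sets lborel" "{z \<in> space lborel. (if z \<in> S then K z else 0) \<noteq> K0 z} \<subseteq> N"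
    unfolding eventually_ae_filter by auto
  with K0 show ?thesis
    by (intro that[of K0 N]) (auto simp: subset_eq split: if_splits)
qed

lemma AE_lebesgue_on_diff_notin_null:
  assumes S[measurable]: "S \<in> sets borel" and [measurable]: "\<pi> \<in> borel_measurable borel"
    and invariant: "\<And>h x. h \<in> borel_measurable borel \<Longrightarrow>
      (\<integral>\<^sup>+y. h (\<pi> (x - y)) * indicator S y \<partial>lborel) = (\<integral>\<^sup>+z. h z * indicator S z \<partial>lborel)"
    and N: "N \<in> null_sets lborel"
  shows "AE y in lebesgue_on S. \<pi> (x - y) \<notin> N"
proof -
  have [measurable]: "N \<in> sets borel"
    using null_setsD2[OF N] by simp
  have "(\<integral>\<^sup>+y. indicator N (\<pi> (x - y)) * indicator S y \<partial>lborel) = (\<integral>\<^sup>+z. indicator N z * indicator S z \<partial>lborel)"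
    by (rule invariant) measurable
  also have "\<dots> \<le> (\<integral>\<^sup>+z. indicator N z \<partial>lborel)"
    by (intro nn_integral_mono) (simp add: indicator_def)
  also have "\<dots> = 0"
    using N by (simp add: null_setsD1)
  finally have "AE y in lborel. indicator N (\<pi> (x - y)) * indicator S y = (0::ennreal)"
    by (subst nn_integral_0_iff_AE[symmetric]) (auto intro: antisym)
  then have "AE y in lebesgue. y \<in> S \<longrightarrow> \<pi> (x - y) \<notin> N"
    by (rule AE_completion[THEN eventually_mono]) (auto simp: indicator_def)
  then show ?thesis
    by (simp add: AE_restrict_space_iff)
qed

text \<open>
  Here S is a fundamental domain of a lattice and \<pi> the reduction modulo the lattice: S = UNIV and
  \<pi> = id for \<real>^d, S = [0,1]^d and \<pi> = frac_part for the torus. As K is only Lebesgue measurable,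
  (x, y) \<mapsto> K (x - y) need not be measurable on the product; it is replaced by the Borel kernel
  K' z = max 0 (K0 (\<pi> z)), which agrees with it for almost every y.
\<close>
lemma half_power_L2_bounds_conv_fundamental_domain:
  fixes K f :: "'a::euclidean_space \<Rightarrow> real" and \<pi> :: "'a \<Rightarrow> 'a"
  assumes S[measurable]: "S \<in> sets borel"
    and \<pi>[measurable]: "\<pi> \<in> borel_measurable borel"
    and \<pi>_in: "\<And>z. \<pi> z \<in> S"
    and K_\<pi>: "\<And>z. K (\<pi> z) = K z"
    and invariant_left: "\<And>h x. h \<in> borel_measurable borel \<Longrightarrow>
      (\<integral>\<^sup>+y. h (\<pi> (x - y)) * indicator S y \<partial>lborel) = (\<integral>\<^sup>+z. h z * indicator S z \<partial>lborel)"
    and invariant_right: "\<And>h y. h \<in> borel_measurable borel \<Longrightarrow>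
      (\<integral>\<^sup>+x. h (\<pi> (x - y)) * indicator S x \<partial>lborel) = (\<integral>\<^sup>+z. h z * indicator S z \<partial>lborel)"
    and K_nonneg: "\<And>z. 0 \<le> K z"
    and K_int: "integrable (lebesgue_on S) K"
    and K_mass: "(\<integral>z. K z \<partial>lebesgue_on S) = 1"
    and p: "1 < p" and f: "memLp (lebesgue_on S) p f"
  shows "half_power_L2_bounds (lebesgue_on S) p (conv (lebesgue_on S) K) f"
proof -
  obtain K0 N where K0[measurable]: "K0 \<in> borel_measurable borel" and N: "N \<in> null_sets lborel"
    and K0_eq: "\<And>z. z \<in> S \<Longrightarrow> z \<notin> N \<Longrightarrow> K z = K0 z"
    using borel_representative_lebesgue_on[OF S borel_measurable_integrable[OF K_int]] by blast
  have [measurable]: "N \<in> sets borel"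
    using null_setsD2[OF N] by simp
  define K' where "K' z = max 0 (K0 (\<pi> z))" for z
  have [measurable]: "K' \<in> borel_measurable borel"
    unfolding K'_def by measurable
  have K'_nonneg: "0 \<le> K' z" for z
    unfolding K'_def by simp
  have K_eq: "K z = K' z" if "\<pi> z \<notin> N" for z
    using K0_eq[OF \<pi>_in that] K_\<pi>[of z] K_nonneg[of z] unfolding K'_def by simp
  have mass: "(\<integral>\<^sup>+z. ennreal (max 0 (K0 z)) * indicator S z \<partial>lborel) = 1"
  proof -
    have "AE z in lborel. z \<notin> N"
      using N by (rule AE_not_in)
    then have "AE z in lebesgue. ennreal (max 0 (K0 z)) * indicator S z = ennreal (K z) * indicator S z"
      by (rule AE_completion[THEN eventually_mono]) (auto simp: K0_eq[symmetric] K_nonneg indicator_def)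
    then have "(\<integral>\<^sup>+z. ennreal (max 0 (K0 z)) * indicator S z \<partial>lebesgue) = (\<integral>\<^sup>+z. K z \<partial>lebesgue_on S)"
      unfolding nn_integral_lebesgue_on_borel[OF S] by (rule nn_integral_cong_AE)
    then have "(\<integral>\<^sup>+z. ennreal (max 0 (K0 z)) * indicator S z \<partial>lborel) = (\<integral>\<^sup>+z. K z \<partial>lebesgue_on S)"
      by (simp add: nn_integral_completion)
    also have "\<dots> = 1"
      using K_mass nn_integral_eq_integral[OF K_int] K_nonneg by simp
    finally show ?thesis .
  qed
  have row: "(\<integral>\<^sup>+y. K' (x - y) \<partial>lebesgue_on S) = 1" for x
    using mass invariant_left[of "\<lambda>z. ennreal (max 0 (K0 z))" x]
    by (simp add: nn_integral_lebesgue_on_borel[OF S] nn_integral_completion K'_def)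
  have column: "(\<integral>\<^sup>+x. K' (x - y) \<partial>lebesgue_on S) = 1" for y
    using mass invariant_right[of "\<lambda>z. ennreal (max 0 (K0 z))" y]
    by (simp add: nn_integral_lebesgue_on_borel[OF S] nn_integral_completion K'_def)
  have K_ae: "AE y in lebesgue_on S. K (x - y) = K' (x - y)" for x
  proof -
    have "AE y in lebesgue_on S. \<pi> (x - y) \<notin> N"
      using S \<pi> invariant_left N by (rule AE_lebesgue_on_diff_notin_null)
    then show ?thesis
      by (rule eventually_mono) (rule K_eq)
  qed
  have "S \<in> sets lebesgue"
    by simp
  then show ?thesis
    by (rule half_power_L2_bounds_conv_lebesgue_on[OF _ _ _ K_ae _ _ p f]) (simp_all add: K'_nonneg row column)
qed

lemma nn_integral_lborel_reflect:
  fixes h :: "'a::euclidean_space \<Rightarrow> ennreal"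
  assumes [measurable]: "h \<in> borel_measurable borel"
  shows "(\<integral>\<^sup>+y. h (x - y) \<partial>lborel) = (\<integral>\<^sup>+z. h z \<partial>lborel)"
proof -
  have "distr lborel borel (\<lambda>y. x - y) = (lborel :: 'a measure)"
    using lborel_affine[of "-1" x] by (simp add: density_1)
  then show ?thesis
    using nn_integral_distr[of "\<lambda>y. x - y" lborel borel h] by simp
qed

lemma nn_integral_lborel_translate:
  fixes h :: "'a::euclidean_space \<Rightarrow> ennreal"
  assumes [measurable]: "h \<in> borel_measurable borel"
  shows "(\<integral>\<^sup>+x. h (x - y) \<partial>lborel) = (\<integral>\<^sup>+z. h z \<partial>lborel)"
  using nn_integral_distr[of "(+) (- y)" lborel borel h] by (simp add: lborel_distr_plus)

lemma half_power_L2_bounds_conv_lebesgue: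
  fixes K f :: "'a::euclidean_space \<Rightarrow> real"
  assumes "\<And>z. 0 \<le> K z" "integrable lebesgue K" "(\<integral>z. K z \<partial>lebesgue) = 1"
    and "1 < p" "memLp lebesgue p f"
  shows "half_power_L2_bounds lebesgue p (conv lebesgue K) f"
  using half_power_L2_bounds_conv_fundamental_domain[of UNIV "\<lambda>z. z" K p f] assms
  by (simp add: lebesgue_on_UNIV_eq nn_integral_lborel_reflect nn_integral_lborel_translate)

section \<open>Periodic integrals over unit cubes\<close>

lemma periodic_shift_int:
  fixes g :: "'a::real_vector \<Rightarrow> 'b"
  assumes periodic: "\<And>z. g (z + b) = g z"
  shows "g (z + of_int n *\<^sub>R b) = g z"
proof -
  have nat: "g (y + real m *\<^sub>R b) = g y" for y m
  proof (induction m)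
    case (Suc m)
    have "y + real (Suc m) *\<^sub>R b = (y + real m *\<^sub>R b) + b"
      by (simp add: scaleR_add_left algebra_simps)
    then show ?case
      using Suc periodic by metis
  qed simp
  show ?thesis
  proof (cases "0 \<le> n")
    case True
    then show ?thesis
      using nat[of z "nat n"] by simp
  next
    case False
    then show ?thesis
      using nat[of "z + of_int n *\<^sub>R b" "nat (- n)"] by simp
  qed
qed

lemma periodic_shift_lattice:
  fixes g :: "'a::euclidean_space \<Rightarrow> 'b"
  assumes periodic: "\<And>z b. b \<in> Basis \<Longrightarrow> g (z + b) = g z"
  shows "g (z + (\<Sum>i\<in>Basis. of_int (m i) *\<^sub>R i)) = g z"
proof -
  have "g (z + (\<Sum>i\<in>I. of_int (m i) *\<^sub>R i)) = g z" if "I \<subseteq> Basis" for I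
    using finite_subset[OF that finite_Basis] that
  proof (induction I arbitrary: z rule: finite_induct)
    case (insert i I)
    then have "g (z + (\<Sum>i\<in>insert i I. of_int (m i) *\<^sub>R i))
        = g ((z + (\<Sum>i\<in>I. of_int (m i) *\<^sub>R i)) + of_int (m i) *\<^sub>R i)"
      by (simp add: algebra_simps)
    also have "\<dots> = g z"
      using insert periodic by (simp add: periodic_shift_int)
    finally show ?case .
  qed simp
  then show ?thesis
    by simp
qed

lemma const_if_invariant_along_Basis:
  fixes g :: "'a::euclidean_space \<Rightarrow> 'b"
  assumes invariant: "\<And>z s b. b \<in> Basis \<Longrightarrow> g (z + s *\<^sub>R b) = g z"
  shows "g a = g 0"
proof -
  have "g (\<Sum>i\<in>I. (a \<bullet> i) *\<^sub>R i) = g 0" if "I \<subseteq> Basis" for I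
    using finite_subset[OF that finite_Basis] that
  proof (induction I rule: finite_induct)
    case (insert i I)
    then show ?case
      using invariant[of i "\<Sum>i\<in>I. (a \<bullet> i) *\<^sub>R i" "a \<bullet> i"] by (simp add: add.commute)
  qed simp
  from this[of Basis] show ?thesis
    by (simp add: euclidean_representation)
qed

definition frac_part :: "'a::euclidean_space \<Rightarrow> 'a" where
  "frac_part z = (\<Sum>b\<in>Basis. frac (z \<bullet> b) *\<^sub>R b)"

lemma inner_frac_part: "b \<in> Basis \<Longrightarrow> frac_part z \<bullet> b = frac (z \<bullet> b)"
  unfolding frac_part_def by (simp add: inner_sum_left inner_Basis if_distrib sum.delta cong: if_cong)

lemma frac_part_in_cube: "frac_part z \<in> cbox 0 One"
  unfolding mem_box by (simp add: inner_frac_part frac_ge_0 less_imp_le[OF frac_lt_1])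

lemma frac_part_eq_self: "(\<And>b. b \<in> Basis \<Longrightarrow> 0 \<le> z \<bullet> b \<and> z \<bullet> b < 1) \<Longrightarrow> frac_part z = z"
  by (rule euclidean_eqI) (simp add: inner_frac_part frac_eq)

lemma frac_part_add_Basis: "b \<in> Basis \<Longrightarrow> frac_part (z + b) = frac_part z"
  by (rule euclidean_eqI)
     (auto simp: inner_frac_part inner_add_left inner_Basis frac_def)

lemma measurable_frac_part[measurable]: "frac_part \<in> borel_measurable borel"
proof -
  have "(\<lambda>z::'a. real_of_int \<lfloor>z \<bullet> b\<rfloor>) \<in> borel_measurable borel" for b :: 'a
    using measurable_compose[OF _ borel_measurable_real_floor, of "\<lambda>z::'a. z \<bullet> b" borel] by simp
  then show ?thesis
    unfolding frac_part_def frac_def by measurable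
qed

lemma frac_part_decomposition: "z = frac_part z + (\<Sum>i\<in>Basis. of_int \<lfloor>z \<bullet> i\<rfloor> *\<^sub>R i)"
  by (rule euclidean_eqI)
     (simp add: inner_add_left inner_frac_part frac_def inner_sum_left inner_Basis if_distrib sum.delta
       cong: if_cong)

lemma periodic_frac_part:
  fixes g :: "'a::euclidean_space \<Rightarrow> 'b"
  assumes "\<And>z b. b \<in> Basis \<Longrightarrow> g (z + b) = g z"
  shows "g (frac_part z) = g z"
  using periodic_shift_lattice[OF assms, of "frac_part z" "\<lambda>i. \<lfloor>z \<bullet> i\<rfloor>"]
  by (simp flip: frac_part_decomposition)

lemma AE_lborel_inner_Basis_neq:
  assumes "b \<in> (Basis :: 'a::euclidean_space set)"
  shows "AE z in lborel. z \<bullet> b \<noteq> v"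
proof -
  have "negligible {z::'a. b \<bullet> z = v}"
    using assms by (intro negligible_hyperplane) auto
  then have "{z::'a. b \<bullet> z = v} \<in> null_sets lborel"
    by (simp add: negligible_iff_null_sets null_sets_completion_iff)
  then show ?thesis
    by (rule AE_not_in[THEN eventually_mono]) (simp add: inner_commute)
qed

definition unit_cube_integral :: "('a::euclidean_space \<Rightarrow> ennreal) \<Rightarrow> 'a \<Rightarrow> ennreal" where
  "unit_cube_integral H a = (\<integral>\<^sup>+z. H z * indicator (cbox a (a + One)) z \<partial>lborel)"

context
  fixes H :: "'a::euclidean_space \<Rightarrow> ennreal"
  assumes H_measurable[measurable]: "H \<in> borel_measurable borel"
    and H_periodic: "\<And>z b. b \<in> Basis \<Longrightarrow> H (z + b) = H z"
begin

lemma unit_cube_integral_slide: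
  assumes b: "b \<in> Basis" and u: "0 \<le> u" "u \<le> 1"
  shows "unit_cube_integral H (c + u *\<^sub>R b) = unit_cube_integral H c"
proof -
  define P where "P z \<longleftrightarrow> (\<forall>i\<in>Basis. i \<noteq> b \<longrightarrow> c \<bullet> i \<le> z \<bullet> i \<and> z \<bullet> i \<le> c \<bullet> i + 1)" for z :: 'a
  define I where "I l r = (\<integral>\<^sup>+z. H z * indicator {z. P z \<and> l \<le> z \<bullet> b \<and> z \<bullet> b < r} z \<partial>lborel)" for l r
  have [measurable]: "Measurable.pred borel P"
    unfolding P_def by measurable
  have cube: "unit_cube_integral H (c + v *\<^sub>R b) = I (c \<bullet> b + v) (c \<bullet> b + v + 1)" for v
    unfolding unit_cube_integral_def I_def
    using AE_lborel_inner_Basis_neq[OF b, of "c \<bullet> b + v + 1"]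
    by (intro nn_integral_cong_AE, elim eventually_mono)
       (use b in \<open>auto simp: P_def indicator_def mem_box inner_add_left inner_Basis algebra_simps\<close>)
  have split: "I l m + I m r = I l r" if "l \<le> m" "m \<le> r" for l m r
  proof -
    have "I l m + I m r = (\<integral>\<^sup>+z. H z * indicator {z. P z \<and> l \<le> z \<bullet> b \<and> z \<bullet> b < m} z
        + H z * indicator {z. P z \<and> m \<le> z \<bullet> b \<and> z \<bullet> b < r} z \<partial>lborel)"
      unfolding I_def by (rule nn_integral_add[symmetric]) auto
    also have "\<dots> = I l r"
      unfolding I_def using that by (intro nn_integral_cong) (auto simp: indicator_def)
    finally show ?thesis .
  qed
  have shift: "I (l + 1) (r + 1) = I l r" for l r
  proof -
    have "I (l + 1) (r + 1)
        = (\<integral>\<^sup>+z. H (z + b) * indicator {z. P z \<and> l + 1 \<le> z \<bullet> b \<and> z \<bullet> b < r + 1} (z + b) \<partial>lborel)"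
      unfolding I_def
      using nn_integral_lborel_translate[of "\<lambda>z. H (z + b) * indicator {z. P z \<and> l + 1 \<le> z \<bullet> b \<and> z \<bullet> b < r + 1} (z + b)" b]
      by simp
    also have "\<dots> = I l r"
      unfolding I_def using b
      by (intro nn_integral_cong) (auto simp: H_periodic P_def indicator_def inner_add_left inner_Basis)
    finally show ?thesis .
  qed
  \<comment> \<open>cut the shifted cube at \<open>z \<bullet> b = c \<bullet> b + 1\<close> and move the upper piece back by \<open>b\<close>\<close>
  have "unit_cube_integral H (c + u *\<^sub>R b) = I (c \<bullet> b + u) (c \<bullet> b + 1) + I (c \<bullet> b + 1) (c \<bullet> b + u + 1)"
    using cube split u by simp
  also have "\<dots> = I (c \<bullet> b) (c \<bullet> b + 1)"
    using shift[of "c \<bullet> b" "c \<bullet> b + u"] split[of "c \<bullet> b" "c \<bullet> b + u" "c \<bullet> b + 1"] u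
    by (simp add: add.commute add.left_commute)
  also have "\<dots> = unit_cube_integral H c"
    using cube[of 0] by simp
  finally show ?thesis .
qed

lemma unit_cube_integral_shift:
  assumes b: "b \<in> Basis"
  shows "unit_cube_integral H (c + s *\<^sub>R b) = unit_cube_integral H c"
proof -
  have "c + s *\<^sub>R b = (c + frac s *\<^sub>R b) + of_int \<lfloor>s\<rfloor> *\<^sub>R b"
    by (simp add: frac_def algebra_simps)
  also have "unit_cube_integral H \<dots> = unit_cube_integral H (c + frac s *\<^sub>R b)"
    using unit_cube_integral_slide[OF b, of 1] by (intro periodic_shift_int) simp
  also have "\<dots> = unit_cube_integral H c"
    using unit_cube_integral_slide[OF b frac_ge_0 less_imp_le[OF frac_lt_1]] .
  finally show ?thesis .
qed

lemma unit_cube_integral_const: "unit_cube_integral H a = unit_cube_integral H 0"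
  using unit_cube_integral_shift by (rule const_if_invariant_along_Basis)

end

lemma unit_cube_integral_frac_part:
  fixes h :: "'a::euclidean_space \<Rightarrow> ennreal"
  assumes [measurable]: "h \<in> borel_measurable borel"
  shows "unit_cube_integral (\<lambda>z. h (frac_part z)) a = (\<integral>\<^sup>+z. h z * indicator (cbox 0 One) z \<partial>lborel)"
proof -
  have "unit_cube_integral (\<lambda>z. h (frac_part z)) a = unit_cube_integral (\<lambda>z. h (frac_part z)) 0"
    by (rule unit_cube_integral_const) (auto simp: frac_part_add_Basis)
  also have "\<dots> = (\<integral>\<^sup>+z. h z * indicator (cbox 0 One) z \<partial>lborel)"
    unfolding unit_cube_integral_def
  proof (intro nn_integral_cong_AE)
    have "AE z in lborel. \<forall>b\<in>Basis. z \<bullet> b \<noteq> (1::real)"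
      by (subst AE_ball_countable) (auto intro: AE_lborel_inner_Basis_neq countable_finite)
    then show "AE z in lborel. h (frac_part z) * indicator (cbox 0 (0 + One)) z = h z * indicator (cbox 0 One) z"
      by eventually_elim (auto simp: indicator_def mem_box less_le frac_part_eq_self)
  qed
  finally show ?thesis .
qed

lemma nn_integral_cube_frac_part_diff_left:
  fixes h :: "'a::euclidean_space \<Rightarrow> ennreal"
  assumes [measurable]: "h \<in> borel_measurable borel"
  shows "(\<integral>\<^sup>+y. h (frac_part (x - y)) * indicator (cbox 0 One) y \<partial>lborel)
    = (\<integral>\<^sup>+z. h z * indicator (cbox 0 One) z \<partial>lborel)"
proof -
  have "(\<integral>\<^sup>+y. h (frac_part (x - y)) * indicator (cbox 0 One) y \<partial>lborel)
      = (\<integral>\<^sup>+z. h (frac_part z) * indicator (cbox 0 One) (x - z) \<partial>lborel)"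
    using nn_integral_lborel_reflect[of "\<lambda>z. h (frac_part z) * indicator (cbox 0 One) (x - z)" x] by simp
  also have "\<dots> = unit_cube_integral (\<lambda>z. h (frac_part z)) (x - One)"
    unfolding unit_cube_integral_def
    by (intro nn_integral_cong) (auto simp: indicator_def mem_box inner_diff_left algebra_simps)
  finally show ?thesis
    by (simp add: unit_cube_integral_frac_part)
qed

lemma nn_integral_cube_frac_part_diff_right:
  fixes h :: "'a::euclidean_space \<Rightarrow> ennreal"
  assumes [measurable]: "h \<in> borel_measurable borel"
  shows "(\<integral>\<^sup>+x. h (frac_part (x - y)) * indicator (cbox 0 One) x \<partial>lborel)
    = (\<integral>\<^sup>+z. h z * indicator (cbox 0 One) z \<partial>lborel)"
proof -
  have "(\<integral>\<^sup>+x. h (frac_part (x - y)) * indicator (cbox 0 One) x \<partial>lborel)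
      = (\<integral>\<^sup>+z. h (frac_part z) * indicator (cbox 0 One) (z + y) \<partial>lborel)"
    using nn_integral_lborel_translate[of "\<lambda>z. h (frac_part z) * indicator (cbox 0 One) (z + y)" y] by simp
  also have "\<dots> = unit_cube_integral (\<lambda>z. h (frac_part z)) (- y)"
    unfolding unit_cube_integral_def
    by (intro nn_integral_cong) (auto simp: indicator_def mem_box inner_add_left algebra_simps)
  finally show ?thesis
    by (simp add: unit_cube_integral_frac_part)
qed

lemma half_power_L2_bounds_conv_torus:
  fixes K f :: "'a::euclidean_space \<Rightarrow> real"
  assumes "Zd_periodic K" "\<And>z. 0 \<le> K z" "integrable torus_measure K" "(\<integral>z. K z \<partial>torus_measure) = 1"
    and "1 < p" "memLp torus_measure p f"
  shows "half_power_L2_bounds torus_measure p (conv torus_measure K) f"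
  using assms unfolding torus_measure_def
  by (intro half_power_L2_bounds_conv_fundamental_domain[where \<pi>=frac_part])
     (auto simp: Zd_periodic_def frac_part_in_cube periodic_frac_part
       nn_integral_cube_frac_part_diff_left nn_integral_cube_frac_part_diff_right)

theorem lemma4p4:
  fixes K f :: "'a::euclidean_space \<Rightarrow> real" and p :: real and M :: "'a measure"
  assumes Omega: "M = lebesgue \<or> (M = torus_measure \<and> Zd_periodic K \<and> Zd_periodic f)"
    and K_nonneg: "\<forall>x. 0 \<le> K x"
    and K_int: "integrable M K"
    and K_mass: "(\<integral>x. K x \<partial>M) = 1"
    and p_gt1: "1 < p"
    and f_Lp: "memLp M p f"
  shows "(2 \<le> p \<longrightarrow>
            Lp_norm M p (conv M K f)
              \<le> Lp_norm M 2 (conv M K (\<lambda>y. \<bar>f y\<bar> powr (p / 2))) powr (2 / p))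
       \<and> (p \<le> 2 \<longrightarrow>
            Lp_norm M p (conv M K f)
              \<le> Lp_norm M 2 (conv M K (\<lambda>y. \<bar>f y\<bar> powr (p / 2))) powr (2 * (p - 1) / p)
                 * Lp_norm M p f powr (2 - p))"
proof -
  have "half_power_L2_bounds M p (conv M K) f"
    using Omega
  proof (elim disjE conjE)
    assume M: "M = lebesgue"
    show ?thesis
      using K_nonneg K_int K_mass f_Lp unfolding M
      by (intro half_power_L2_bounds_conv_lebesgue[OF _ _ _ p_gt1]) auto
  next
    assume M: "M = torus_measure" and "Zd_periodic K"
    then show ?thesis
      using K_nonneg K_int K_mass f_Lp unfolding M
      by (intro half_power_L2_bounds_conv_torus[OF _ _ _ _ p_gt1]) auto
  qed
  then show ?thesis
    unfolding half_power_L2_bounds_def .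
qed

end
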